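(* In the reachability strategy-improvement algorithm described in the context, let $\gamma_i$ and $\gamma_{i+1}$ be the player-1 selectors obtained at iterations $i$ and $i+1$. If $\gamma_i$ is proper, then $\gamma_{i+1}$ is also proper.
   Context: Concurrent game structure $G=(S,M,\Gamma_1,\Gamma_2,\delta)$: finite states, finite moves, nonempty move sets $\Gamma_i(s)$, $\delta(s,a_1,a_2)\in\mathrm{Distr}(S)$ (simultaneous independent moves). Selectors assign to each state a distribution on available moves; $\overline{\xi}$ is the memoryless strategy playing $\xi$ forever; $\Pr_s^{\pi_1,\pi_2}$ is the induced measure on plays; $\mathrm{Reach}(X)$: plays visiting $X$. $\mathrm{val}_1^{\pi_1}(\mathrm{Reach}(T))(s)=\inf_{\pi_2}\Pr_s^{\pi_1,\pi_2}(\mathrm{Reach}(T))$, $\mathrm{val}_1(\mathrm{Reach}(T))=\sup_{\pi_1}\mathrm{val}_1^{\pi_1}(\mathrm{Reach}(T))$. For a valuation $v:S\to[0,1]$: $\mathrm{Pre}_{\xi_1,\xi_2}(v)(s)=\sum_{a,b}\sum_tv(t)\delta(s,a,b)(t)\xi_1(s)(a)\xi_2(s)(b)$, $\mathrm{Pre}_{1:\xi_1}(v)(s)=\inf_{\xi_2}\mathrm{Pre}_{\xi_1,\xi_2}(v)(s)$, $\mathrm{Pre}_1(v)(s)=\sup_{\xi_1}\mathrm{Pre}_{1:\xi_1}(v)(s)$. Fix $T\subseteq S$, $W_2=\{s:\mathrm{val}_1(\mathrm{Reach}(T))(s)=0\}$; all states of $T\cup W_2$ are absorbing. A player-1 strategy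 is proper if, against every player-2 strategy, from every $s\in S\setminus(T\cup W_2)$, $T\cup W_2$ is reached with probability 1; a selector $\xi$ is proper if $\overline{\xi}$ is. The algorithm: $\gamma_0$ is the uniform selector on $\Gamma_1(s)$, $v_i=\mathrm{val}_1^{\overline{\gamma}_i}(\mathrm{Reach}(T))$. At iteration $i$: $I=\{s\in S\setminus(T\cup W_2):\mathrm{Pre}_1(v_i)(s)>v_i(s)\}$; $\xi_1$ is a selector with $\mathrm{Pre}_{1:\xi_1}(v_i)(s)=\mathrm{Pre}_1(v_i)(s)$ for $s\in I$; $\gamma_{i+1}(s)=\gamma_i(s)$ for $s\notin I$ and $\gamma_{i+1}(s)=\xi_1(s)$ for $s\in I$; stop when $I=\emptyset$. *)

theory Defs
  imports "HOL-Probability.Probability_Mass_Function"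
begin

definition cgs :: "('s::finite \<Rightarrow> 'm::finite set) \<Rightarrow> ('s \<Rightarrow> 'm set) \<Rightarrow> bool" where
  "cgs Mv1 Mv2 \<longleftrightarrow> (\<forall>s. Mv1 s \<noteq> {} \<and> Mv2 s \<noteq> {})"

definition strategy :: "('s \<Rightarrow> 'm set) \<Rightarrow> ('s list \<Rightarrow> 'm pmf) \<Rightarrow> bool" where
  "strategy Mv \<pi> \<longleftrightarrow> (\<forall>h. h \<noteq> [] \<longrightarrow> set_pmf (\<pi> h) \<subseteq> Mv (last h))"

definition selector :: "('s \<Rightarrow> 'm set) \<Rightarrow> ('s \<Rightarrow> 'm pmf) \<Rightarrow> bool" where
  "selector Mv xi \<longleftrightarrow> (\<forall>s. set_pmf (xi s) \<subseteq> Mv s)"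

definition memoryless :: "('s \<Rightarrow> 'm pmf) \<Rightarrow> ('s list \<Rightarrow> 'm pmf)" where
  "memoryless xi = (\<lambda>h. xi (last h))"

definition uniform_selector :: "('s \<Rightarrow> 'm set) \<Rightarrow> ('s \<Rightarrow> 'm pmf)" where
  "uniform_selector Mv = (\<lambda>s. pmf_of_set (Mv s))"

fun reach_n :: "('s::finite \<Rightarrow> 'm::finite \<Rightarrow> 'm \<Rightarrow> 's pmf) \<Rightarrow> 's set
    \<Rightarrow> ('s list \<Rightarrow> 'm pmf) \<Rightarrow> ('s list \<Rightarrow> 'm pmf) \<Rightarrow> nat \<Rightarrow> 's list \<Rightarrow> real" where
  "reach_n delta X \<pi>1 \<pi>2 0 h = (if last h \<in> X then 1 else 0)"
| "reach_n delta X \<pi>1 \<pi>2 (Suc n) h =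
     (if last h \<in> X then 1 else
       (\<Sum>a\<in>UNIV. \<Sum>b\<in>UNIV. pmf (\<pi>1 h) a * pmf (\<pi>2 h) b *
          (\<Sum>t\<in>UNIV. pmf (delta (last h) a b) t * reach_n delta X \<pi>1 \<pi>2 n (h @ [t]))))"

text \<open>Pr_s^{\<pi>1,\<pi>2}(Reach X), as the limit (supremum) of the finite-horizon probabilities
  (continuity of the induced measure on plays).\<close>
definition prob_reach :: "('s::finite \<Rightarrow> 'm::finite \<Rightarrow> 'm \<Rightarrow> 's pmf) \<Rightarrow> 's set
    \<Rightarrow> ('s list \<Rightarrow> 'm pmf) \<Rightarrow> ('s list \<Rightarrow> 'm pmf) \<Rightarrow> 's \<Rightarrow> real" where
  "prob_reach delta X \<pi>1 \<pi>2 s = (SUP n. reach_n delta X \<pi>1 \<pi>2 n [s])"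

definition val1_strat :: "('s \<Rightarrow> 'm set) \<Rightarrow> ('s::finite \<Rightarrow> 'm::finite \<Rightarrow> 'm \<Rightarrow> 's pmf)
    \<Rightarrow> 's set \<Rightarrow> ('s list \<Rightarrow> 'm pmf) \<Rightarrow> 's \<Rightarrow> real" where
  "val1_strat Mv2 delta T \<pi>1 s =
     (INF \<pi>2 \<in> {\<pi>2. strategy Mv2 \<pi>2}. prob_reach delta T \<pi>1 \<pi>2 s)"

definition val1 :: "('s \<Rightarrow> 'm set) \<Rightarrow> ('s \<Rightarrow> 'm set) \<Rightarrow> ('s::finite \<Rightarrow> 'm::finite \<Rightarrow> 'm \<Rightarrow> 's pmf)
    \<Rightarrow> 's set \<Rightarrow> 's \<Rightarrow> real" where
  "val1 Mv1 Mv2 delta T s =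
     (SUP \<pi>1 \<in> {\<pi>1. strategy Mv1 \<pi>1}. val1_strat Mv2 delta T \<pi>1 s)"

definition W2 :: "('s \<Rightarrow> 'm set) \<Rightarrow> ('s \<Rightarrow> 'm set) \<Rightarrow> ('s::finite \<Rightarrow> 'm::finite \<Rightarrow> 'm \<Rightarrow> 's pmf)
    \<Rightarrow> 's set \<Rightarrow> 's set" where
  "W2 Mv1 Mv2 delta T = {s. val1 Mv1 Mv2 delta T s = 0}"

definition absorbing :: "('s \<Rightarrow> 'm set) \<Rightarrow> ('s \<Rightarrow> 'm set) \<Rightarrow> ('s \<Rightarrow> 'm \<Rightarrow> 'm \<Rightarrow> 's pmf) \<Rightarrow> 's set \<Rightarrow> bool" where
  "absorbing Mv1 Mv2 delta X \<longleftrightarrow>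
     (\<forall>s\<in>X. \<forall>a\<in>Mv1 s. \<forall>b\<in>Mv2 s. delta s a b = return_pmf s)"

definition proper_strategy :: "('s \<Rightarrow> 'm set) \<Rightarrow> ('s \<Rightarrow> 'm set) \<Rightarrow> ('s::finite \<Rightarrow> 'm::finite \<Rightarrow> 'm \<Rightarrow> 's pmf)
    \<Rightarrow> 's set \<Rightarrow> ('s list \<Rightarrow> 'm pmf) \<Rightarrow> bool" where
  "proper_strategy Mv1 Mv2 delta T \<pi>1 \<longleftrightarrow>
     (\<forall>\<pi>2. strategy Mv2 \<pi>2 \<longrightarrow>
        (\<forall>s. s \<notin> T \<union> W2 Mv1 Mv2 delta T \<longrightarrow>
           prob_reach delta (T \<union> W2 Mv1 Mv2 delta T) \<pi>1 \<pi>2 s = 1))"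

definition proper_selector :: "('s \<Rightarrow> 'm set) \<Rightarrow> ('s \<Rightarrow> 'm set) \<Rightarrow> ('s::finite \<Rightarrow> 'm::finite \<Rightarrow> 'm \<Rightarrow> 's pmf)
    \<Rightarrow> 's set \<Rightarrow> ('s \<Rightarrow> 'm pmf) \<Rightarrow> bool" where
  "proper_selector Mv1 Mv2 delta T xi \<longleftrightarrow>
     proper_strategy Mv1 Mv2 delta T (memoryless xi)"

definition Pre_pair :: "('s::finite \<Rightarrow> 'm::finite \<Rightarrow> 'm \<Rightarrow> 's pmf) \<Rightarrow> ('s \<Rightarrow> real)
    \<Rightarrow> ('s \<Rightarrow> 'm pmf) \<Rightarrow> ('s \<Rightarrow> 'm pmf) \<Rightarrow> 's \<Rightarrow> real" where
  "Pre_pair delta v xi1 xi2 s =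
     (\<Sum>a\<in>UNIV. \<Sum>b\<in>UNIV. \<Sum>t\<in>UNIV. v t * pmf (delta s a b) t * pmf (xi1 s) a * pmf (xi2 s) b)"

definition Pre1_sel :: "('s \<Rightarrow> 'm set) \<Rightarrow> ('s::finite \<Rightarrow> 'm::finite \<Rightarrow> 'm \<Rightarrow> 's pmf)
    \<Rightarrow> ('s \<Rightarrow> real) \<Rightarrow> ('s \<Rightarrow> 'm pmf) \<Rightarrow> 's \<Rightarrow> real" where
  "Pre1_sel Mv2 delta v xi1 s = (INF xi2 \<in> {xi2. selector Mv2 xi2}. Pre_pair delta v xi1 xi2 s)"

definition Pre1 :: "('s \<Rightarrow> 'm set) \<Rightarrow> ('s \<Rightarrow> 'm set) \<Rightarrow> ('s::finite \<Rightarrow> 'm::finite \<Rightarrow> 'm \<Rightarrow> 's pmf)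
    \<Rightarrow> ('s \<Rightarrow> real) \<Rightarrow> 's \<Rightarrow> real" where
  "Pre1 Mv1 Mv2 delta v s = (SUP xi1 \<in> {xi1. selector Mv1 xi1}. Pre1_sel Mv2 delta v xi1 s)"

definition improve_step :: "('s \<Rightarrow> 'm set) \<Rightarrow> ('s \<Rightarrow> 'm set) \<Rightarrow> ('s::finite \<Rightarrow> 'm::finite \<Rightarrow> 'm \<Rightarrow> 's pmf)
    \<Rightarrow> 's set \<Rightarrow> ('s \<Rightarrow> 'm pmf) \<Rightarrow> ('s \<Rightarrow> 'm pmf) \<Rightarrow> bool" where
  "improve_step Mv1 Mv2 delta T gamma gamma' \<longleftrightarrow>
     (let v = val1_strat Mv2 delta T (memoryless gamma);
          I = {s. s \<notin> T \<union> W2 Mv1 Mv2 delta T \<and> Pre1 Mv1 Mv2 delta v s > v s}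
      in \<exists>xi1. selector Mv1 xi1 \<and>
               (\<forall>s\<in>I. Pre1_sel Mv2 delta v xi1 s = Pre1 Mv1 Mv2 delta v s) \<and>
               gamma' = (\<lambda>s. if s \<in> I then xi1 s else gamma s))"

end

theory Submission
  imports Defs
begin

text \<open>Suppose the improved selector \<open>\<gamma>'\<close> is not proper. The states from which \<open>\<gamma>'\<close> does not
  reach \<open>T \<union> W2\<close> with positive probability against every player-2 move form a nonempty set
  \<open>Z\<close> that player 2 keeps closed by a memoryless choice \<open>\<beta>\<close>. Let \<open>Z'\<close> be the states of \<open>Z\<close> where
  the value \<open>v\<close> of the old selector \<open>\<gamma>\<close> is maximal. There \<open>\<gamma>\<close> was not switched: against \<open>\<beta>\<close>
  every successor stays in \<open>Z\<close>, so \<open>Pre\<^sub>1(v)\<close> cannot exceed the maximum of \<open>v\<close>. As \<open>v\<close> is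
  superharmonic for \<open>\<gamma>\<close> against every player-2 move, the \<open>\<gamma>\<close>-successors of \<open>Z'\<close> under \<open>\<beta>\<close> again
  have maximal value, so \<open>Z'\<close> is closed under \<open>\<gamma>\<close> and \<open>\<beta>\<close>, and from \<open>Z'\<close> player 2 keeps \<open>\<gamma>\<close>
  away from the target forever, contradicting properness of \<open>\<gamma>\<close>.\<close>

definition step_exp :: "'m::finite pmf \<Rightarrow> 'm pmf \<Rightarrow> ('m \<Rightarrow> 'm \<Rightarrow> 's::finite pmf) \<Rightarrow> ('s \<Rightarrow> real) \<Rightarrow> real" where
  "step_exp p q d f = (\<Sum>a\<in>UNIV. \<Sum>b\<in>UNIV. pmf p a * pmf q b * (\<Sum>t\<in>UNIV. pmf (d a b) t * f t))"

lemma sum_pmf_UNIV: "(\<Sum>t\<in>(UNIV::'a::finite set). pmf p t) = 1"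
  by (rule sum_pmf_eq_1) auto

lemma sum_UNIV_pmf_support:
  "(\<Sum>x\<in>(UNIV::'a::finite set). pmf p x * f x) = (\<Sum>x\<in>set_pmf p. pmf p x * f x)"
  by (rule sum.mono_neutral_right) (auto simp: set_pmf_eq)

lemma step_exp_support:
  "step_exp p q d f = (\<Sum>a\<in>set_pmf p. \<Sum>b\<in>set_pmf q. \<Sum>t\<in>set_pmf (d a b). pmf p a * pmf q b * pmf (d a b) t * f t)"
proof -
  have "step_exp p q d f = (\<Sum>a\<in>UNIV. pmf p a * (\<Sum>b\<in>UNIV. pmf q b * (\<Sum>t\<in>UNIV. pmf (d a b) t * f t)))"
    unfolding step_exp_def by (simp add: sum_distrib_left mult.assoc)
  also have "\<dots> = (\<Sum>a\<in>set_pmf p. pmf p a * (\<Sum>b\<in>set_pmf q. pmf q b * (\<Sum>t\<in>set_pmf (d a b). pmf (d a b) t * f t)))"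
    by (simp only: sum_UNIV_pmf_support)
  finally show ?thesis by (simp add: sum_distrib_left mult.assoc)
qed

lemma step_exp_const [simp]: "step_exp p q d (\<lambda>_. c) = c"
  unfolding step_exp_def
  by (simp add: sum_pmf_UNIV mult.assoc flip: sum_distrib_right sum_distrib_left)

lemma step_exp_diff_const: "step_exp p q d (\<lambda>t. c - f t) = c - step_exp p q d f"
proof -
  have "step_exp p q d (\<lambda>t. c - f t) = step_exp p q d (\<lambda>_. c) - step_exp p q d f"
    unfolding step_exp_def by (simp add: right_diff_distrib sum_subtractf)
  then show ?thesis by simp
qed

lemma step_exp_add_const: "step_exp p q d (\<lambda>t. f t + c) = step_exp p q d f + c"
proof -
  have "step_exp p q d (\<lambda>t. f t + c) = step_exp p q d f + step_exp p q d (\<lambda>_. c)"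
    unfolding step_exp_def by (simp add: distrib_left sum.distrib)
  then show ?thesis by simp
qed

lemma step_exp_mult_const: "step_exp p q d (\<lambda>t. f t * c) = step_exp p q d f * c"
  unfolding step_exp_def by (simp add: sum_distrib_right mult.assoc)

lemma step_exp_mono_support:
  assumes "\<And>a b t. a \<in> set_pmf p \<Longrightarrow> b \<in> set_pmf q \<Longrightarrow> t \<in> set_pmf (d a b) \<Longrightarrow> f t \<le> g t"
  shows "step_exp p q d f \<le> step_exp p q d g"
  unfolding step_exp_support using assms by (intro sum_mono mult_left_mono) auto

lemma step_exp_mono: "(\<And>t. f t \<le> g t) \<Longrightarrow> step_exp p q d f \<le> step_exp p q d g"
  by (rule step_exp_mono_support)

lemma step_exp_nonneg: "(\<And>t. 0 \<le> f t) \<Longrightarrow> 0 \<le> step_exp p q d f"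
  using step_exp_mono[of "\<lambda>_. 0" f] by simp

lemma step_exp_term_le:
  assumes nonneg: "\<And>a b t. a \<in> set_pmf p \<Longrightarrow> b \<in> set_pmf q \<Longrightarrow> t \<in> set_pmf (d a b) \<Longrightarrow> 0 \<le> f t"
    and a: "a \<in> set_pmf p" and b: "b \<in> set_pmf q" and t: "t \<in> set_pmf (d a b)"
  shows "pmf p a * pmf q b * pmf (d a b) t * f t \<le> step_exp p q d f"
proof -
  let ?w = "\<lambda>a b t. pmf p a * pmf q b * pmf (d a b) t * f t"
  have "?w a b t \<le> (\<Sum>t\<in>set_pmf (d a b). ?w a b t)"
    using a b t nonneg by (intro member_le_sum) auto
  also have "\<dots> \<le> (\<Sum>b\<in>set_pmf q. \<Sum>t\<in>set_pmf (d a b). ?w a b t)"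
    using a b nonneg by (intro member_le_sum sum_nonneg mult_nonneg_nonneg) auto
  also have "\<dots> \<le> (\<Sum>a\<in>set_pmf p. \<Sum>b\<in>set_pmf q. \<Sum>t\<in>set_pmf (d a b). ?w a b t)"
    using a nonneg by (intro member_le_sum sum_nonneg mult_nonneg_nonneg) auto
  finally show ?thesis unfolding step_exp_support .
qed

lemma step_exp_ge_max_imp_eq:
  assumes le: "\<And>a b t. a \<in> set_pmf p \<Longrightarrow> b \<in> set_pmf q \<Longrightarrow> t \<in> set_pmf (d a b) \<Longrightarrow> f t \<le> M"
    and "M \<le> step_exp p q d f"
    and supp: "a \<in> set_pmf p" "b \<in> set_pmf q" "t \<in> set_pmf (d a b)"
  shows "f t = M"
proof -
  have "pmf p a * pmf q b * pmf (d a b) t * (M - f t) \<le> step_exp p q d (\<lambda>t. M - f t)"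
    using le supp by (intro step_exp_term_le) auto
  also have "\<dots> \<le> 0" using assms(2) by (simp add: step_exp_diff_const)
  finally have "M - f t \<le> 0" using supp by (simp add: set_pmf_eq' zero_less_mult_iff mult_le_0_iff)
  then show ?thesis using le supp by fastforce
qed

lemma step_exp_lower_bound:
  assumes nonneg: "\<And>t. 0 \<le> f t"
    and move: "\<And>b. b \<in> set_pmf q \<Longrightarrow> \<exists>a\<in>set_pmf p. \<exists>t\<in>set_pmf (d a b). c \<le> pmf p a * pmf (d a b) t * f t"
  shows "c \<le> step_exp p q d f"
proof -
  have "pmf q b * c \<le> (\<Sum>a\<in>set_pmf p. \<Sum>t\<in>set_pmf (d a b). pmf p a * pmf q b * pmf (d a b) t * f t)"
    if b: "b \<in> set_pmf q" for b
  proof -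
    obtain a t where a: "a \<in> set_pmf p" and t: "t \<in> set_pmf (d a b)"
      and c: "c \<le> pmf p a * pmf (d a b) t * f t"
      using move[OF b] by blast
    have "pmf q b * c \<le> pmf p a * pmf q b * pmf (d a b) t * f t"
      using mult_left_mono[OF c pmf_nonneg[of q b]] by (simp add: algebra_simps)
    also have "\<dots> \<le> (\<Sum>t\<in>set_pmf (d a b). pmf p a * pmf q b * pmf (d a b) t * f t)"
      using t nonneg by (intro member_le_sum) auto
    also have "\<dots> \<le> (\<Sum>a\<in>set_pmf p. \<Sum>t\<in>set_pmf (d a b). pmf p a * pmf q b * pmf (d a b) t * f t)"
      using a nonneg by (intro member_le_sum sum_nonneg mult_nonneg_nonneg) auto
    finally show ?thesis .
  qed
  then have "(\<Sum>b\<in>set_pmf q. pmf q b * c) \<le> step_exp p q d f"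
    unfolding step_exp_support by (subst sum.swap) (rule sum_mono)
  moreover have "(\<Sum>b\<in>set_pmf q. pmf q b * c) = c"
    by (simp add: sum_pmf_eq_1 flip: sum_distrib_right)
  ultimately show ?thesis by simp
qed

lemma reach_n_Suc: "reach_n delta X \<pi>1 \<pi>2 (Suc n) h =
   (if last h \<in> X then 1
    else step_exp (\<pi>1 h) (\<pi>2 h) (delta (last h)) (\<lambda>t. reach_n delta X \<pi>1 \<pi>2 n (h @ [t])))"
  by (simp add: step_exp_def)

declare reach_n.simps(2)[simp del]

lemma reach_n_last_in: "last h \<in> X \<Longrightarrow> reach_n delta X \<pi>1 \<pi>2 n h = 1"
  by (cases n) (auto simp: reach_n_Suc)

lemma reach_n_nonneg: "0 \<le> reach_n delta X \<pi>1 \<pi>2 n h"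
  by (induction n arbitrary: h) (auto simp: reach_n_Suc intro!: step_exp_nonneg)

lemma reach_n_le_1: "reach_n delta X \<pi>1 \<pi>2 n h \<le> 1"
proof (induction n arbitrary: h)
  case (Suc n)
  have "step_exp (\<pi>1 h) (\<pi>2 h) (delta (last h)) (\<lambda>t. reach_n delta X \<pi>1 \<pi>2 n (h @ [t]))
      \<le> step_exp (\<pi>1 h) (\<pi>2 h) (delta (last h)) (\<lambda>_. 1)"
    by (intro step_exp_mono Suc.IH)
  then show ?case by (simp add: reach_n_Suc)
qed simp

lemma reach_n_le_Suc: "reach_n delta X \<pi>1 \<pi>2 n h \<le> reach_n delta X \<pi>1 \<pi>2 (Suc n) h"
proof (induction n arbitrary: h)
  case 0
  then show ?case by (simp add: reach_n_Suc reach_n_nonneg step_exp_nonneg)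
next
  case (Suc n)
  then show ?case by (subst (1 2) reach_n_Suc) (auto intro: step_exp_mono)
qed

lemma reach_n_Cons: "h \<noteq> [] \<Longrightarrow> reach_n delta X \<pi>1 \<pi>2 n (x # h) =
   reach_n delta X (\<lambda>h. \<pi>1 (x # h)) (\<lambda>h. \<pi>2 (x # h)) n h"
  by (induction n arbitrary: h) (auto simp: reach_n_Suc)

lemma reach_n_cong:
  assumes "\<And>ys. \<pi>1 (h @ ys) = \<pi>1' (h @ ys)" and "\<And>ys. \<pi>2 (h @ ys) = \<pi>2' (h @ ys)"
  shows "reach_n delta X \<pi>1 \<pi>2 n h = reach_n delta X \<pi>1' \<pi>2' n h"
  using assms
proof (induction n arbitrary: h)
  case (Suc n)
  have "reach_n delta X \<pi>1 \<pi>2 n (h @ [t]) = reach_n delta X \<pi>1' \<pi>2' n (h @ [t])" for t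
    using Suc.prems by (intro Suc.IH) simp_all
  then show ?case using Suc.prems[of "[]"] by (simp add: reach_n_Suc)
qed simp

lemma reach_n_le_prob_reach: "reach_n delta X \<pi>1 \<pi>2 n [s] \<le> prob_reach delta X \<pi>1 \<pi>2 s"
  unfolding prob_reach_def
  by (rule cSUP_upper) (auto intro!: bdd_aboveI[where M=1] reach_n_le_1)

lemma prob_reach_nonneg: "0 \<le> prob_reach delta X \<pi>1 \<pi>2 s"
  using reach_n_le_prob_reach[of delta X \<pi>1 \<pi>2 0 s] reach_n_nonneg[of delta X \<pi>1 \<pi>2 0 "[s]"]
  by linarith

lemma prob_reach_le_1: "prob_reach delta X \<pi>1 \<pi>2 s \<le> 1"
  unfolding prob_reach_def by (rule cSUP_least) (auto intro: reach_n_le_1)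

lemma reach_n_miss_add:
  assumes "\<And>h. h \<noteq> [] \<Longrightarrow> 1 - reach_n delta X \<pi>1 \<pi>2 m h \<le> c" and "0 \<le> c" and "h \<noteq> []"
  shows "1 - reach_n delta X \<pi>1 \<pi>2 (n + m) h \<le> (1 - reach_n delta X \<pi>1 \<pi>2 n h) * c"
  using assms(3)
proof (induction n arbitrary: h)
  case 0
  then show ?case using assms(1,2) by (cases "last h \<in> X") (auto simp: reach_n_last_in)
next
  case (Suc n)
  let ?E = "step_exp (\<pi>1 h) (\<pi>2 h) (delta (last h))"
  show ?case
  proof (cases "last h \<in> X")
    case False
    have "1 - reach_n delta X \<pi>1 \<pi>2 (Suc n + m) h = ?E (\<lambda>t. 1 - reach_n delta X \<pi>1 \<pi>2 (n + m) (h @ [t]))"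
      using False by (simp add: reach_n_Suc step_exp_diff_const)
    also have "\<dots> \<le> ?E (\<lambda>t. (1 - reach_n delta X \<pi>1 \<pi>2 n (h @ [t])) * c)"
      by (intro step_exp_mono Suc.IH) simp
    also have "\<dots> = (1 - reach_n delta X \<pi>1 \<pi>2 (Suc n) h) * c"
      using False by (simp add: reach_n_Suc step_exp_diff_const step_exp_mult_const)
    finally show ?thesis .
  qed (simp add: reach_n_last_in)
qed

lemma prob_reach_eq_1_if_uniform_lower_bound:
  assumes q: "0 < q" and bound: "\<And>h. h \<noteq> [] \<Longrightarrow> q \<le> reach_n delta X \<pi>1 \<pi>2 N h"
  shows "prob_reach delta X \<pi>1 \<pi>2 s = 1"
proof -
  have q1: "q \<le> 1" using bound[of "[s]"] reach_n_le_1[of delta X \<pi>1 \<pi>2 N "[s]"] by simp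
  have miss: "1 - reach_n delta X \<pi>1 \<pi>2 (k * N) h \<le> (1 - q) ^ k" if "h \<noteq> []" for k h
    using that
  proof (induction k arbitrary: h)
    case 0
    then show ?case using reach_n_nonneg[of delta X \<pi>1 \<pi>2 0 h] by simp
  next
    case (Suc k)
    have "1 - reach_n delta X \<pi>1 \<pi>2 (N + k * N) h \<le> (1 - reach_n delta X \<pi>1 \<pi>2 N h) * (1 - q) ^ k"
      using Suc q1 by (intro reach_n_miss_add) auto
    also have "\<dots> \<le> (1 - q) * (1 - q) ^ k"
      using bound[OF Suc.prems] q1 by (intro mult_right_mono) auto
    finally show ?case by (simp add: add.commute)
  qed
  show ?thesis
  proof (rule ccontr)
    assume "prob_reach delta X \<pi>1 \<pi>2 s \<noteq> 1"
    then have gap: "0 < 1 - prob_reach delta X \<pi>1 \<pi>2 s"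
      using prob_reach_le_1[of delta X \<pi>1 \<pi>2 s] by linarith
    obtain k where "(1 - q) ^ k < 1 - prob_reach delta X \<pi>1 \<pi>2 s"
      using real_arch_pow_inv[OF gap, of "1 - q"] q by auto
    then show False
      using miss[of "[s]" k] reach_n_le_prob_reach[of delta X \<pi>1 \<pi>2 "k * N" s] by simp
  qed
qed

lemma strategy_memoryless_return:
  "(\<And>s. \<beta> s \<in> Mv2 s) \<Longrightarrow> strategy Mv2 (memoryless (\<lambda>s. return_pmf (\<beta> s)))"
  by (simp add: strategy_def memoryless_def)

definition closed_under :: "('s \<Rightarrow> 'm \<Rightarrow> 'm \<Rightarrow> 's pmf) \<Rightarrow> ('s \<Rightarrow> 'm pmf) \<Rightarrow> ('s \<Rightarrow> 'm) \<Rightarrow> 's set \<Rightarrow> bool" where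
  "closed_under delta g \<beta> Z \<longleftrightarrow> (\<forall>s\<in>Z. \<forall>a\<in>set_pmf (g s). set_pmf (delta s a (\<beta> s)) \<subseteq> Z)"

lemma closed_under_reach_n_eq_0:
  assumes closed: "closed_under delta g \<beta> Z" and disj: "Z \<inter> X = {}"
  shows "last h \<in> Z \<Longrightarrow> reach_n delta X (memoryless g) (memoryless (\<lambda>s. return_pmf (\<beta> s))) n h = 0"
proof (induction n arbitrary: h)
  case 0
  then show ?case using disj by auto
next
  case (Suc n)
  let ?s = "last h"
  let ?E = "step_exp (g ?s) (return_pmf (\<beta> ?s)) (delta ?s)"
  let ?R = "\<lambda>t. reach_n delta X (memoryless g) (memoryless (\<lambda>s. return_pmf (\<beta> s))) n (h @ [t])"
  have "?E ?R \<le> ?E (\<lambda>_. 0)"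
  proof (rule step_exp_mono_support)
    fix a b t assume "a \<in> set_pmf (g ?s)" "b \<in> set_pmf (return_pmf (\<beta> ?s))" "t \<in> set_pmf (delta ?s a b)"
    then have "t \<in> Z" using closed Suc.prems by (auto simp: closed_under_def)
    then show "?R t \<le> 0" using Suc.IH[of "h @ [t]"] by simp
  qed
  moreover have "0 \<le> ?E ?R" by (intro step_exp_nonneg reach_n_nonneg)
  moreover have "?s \<notin> X" using Suc.prems disj by auto
  ultimately show ?case by (simp add: reach_n_Suc memoryless_def)
qed

lemma closed_under_prob_reach_eq_0:
  assumes ne: "\<forall>s. Mv2 s \<noteq> {}"
    and closed: "closed_under delta g \<beta> Z" and moves: "\<forall>s\<in>Z. \<beta> s \<in> Mv2 s"
    and disj: "Z \<inter> X = {}" and s: "s \<in> Z"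
  obtains \<pi>2 where "strategy Mv2 \<pi>2" and "prob_reach delta X (memoryless g) \<pi>2 s = 0"
proof
  define \<beta>' where "\<beta>' s = (if s \<in> Z then \<beta> s else (SOME b. b \<in> Mv2 s))" for s
  have "closed_under delta g \<beta>' Z"
    using closed by (simp add: closed_under_def \<beta>'_def)
  from closed_under_reach_n_eq_0[OF this disj, of "[s]"]
  show "prob_reach delta X (memoryless g) (memoryless (\<lambda>s. return_pmf (\<beta>' s))) s = 0"
    unfolding prob_reach_def using s by simp
  show "strategy Mv2 (memoryless (\<lambda>s. return_pmf (\<beta>' s)))"
    using ne moves by (intro strategy_memoryless_return) (auto simp: \<beta>'_def some_in_eq)
qed

fun attractor :: "('s \<Rightarrow> 'm \<Rightarrow> 'm \<Rightarrow> 's pmf) \<Rightarrow> ('s \<Rightarrow> 'm set) \<Rightarrow> ('s \<Rightarrow> 'm pmf) \<Rightarrow> 's set \<Rightarrow> nat \<Rightarrow> 's set" where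
  "attractor delta Mv2 g X 0 = X"
| "attractor delta Mv2 g X (Suc k) = attractor delta Mv2 g X k \<union>
     {s. \<forall>b\<in>Mv2 s. \<exists>a\<in>set_pmf (g s). set_pmf (delta s a b) \<inter> attractor delta Mv2 g X k \<noteq> {}}"

lemma attractor_mono: "k \<le> l \<Longrightarrow> attractor delta Mv2 g X k \<subseteq> attractor delta Mv2 g X l"
  by (induction l rule: dec_induct) auto

lemma attractor_stabilizes:
  fixes delta :: "'s::finite \<Rightarrow> 'm \<Rightarrow> 'm \<Rightarrow> 's pmf"
  shows "\<exists>N. attractor delta Mv2 g X (Suc N) = attractor delta Mv2 g X N"
proof (rule ccontr)
  assume "\<not> ?thesis"
  then have strict: "attractor delta Mv2 g X N \<subset> attractor delta Mv2 g X (Suc N)" for N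
    by auto
  have "n \<le> card (attractor delta Mv2 g X n)" for n
  proof (induction n)
    case (Suc n)
    have "card (attractor delta Mv2 g X n) < card (attractor delta Mv2 g X (Suc n))"
      by (rule psubset_card_mono[OF _ strict]) simp
    then show ?case using Suc by simp
  qed simp
  moreover have "card (attractor delta Mv2 g X n) \<le> card (UNIV :: 's set)" for n
    by (rule card_mono) auto
  ultimately show False
    by (metis Suc_n_not_le_n order_trans)
qed

definition min_step_prob :: "('s::finite \<Rightarrow> 'm::finite \<Rightarrow> 'm \<Rightarrow> 's pmf) \<Rightarrow> ('s \<Rightarrow> 'm pmf) \<Rightarrow> real" where
  "min_step_prob delta g =
     Min (insert 1 {pmf (g s) a * pmf (delta s a b) t | s a b t. 0 < pmf (g s) a * pmf (delta s a b) t})"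

lemma finite_step_probs:
  fixes delta :: "'s::finite \<Rightarrow> 'm::finite \<Rightarrow> 'm \<Rightarrow> 's pmf"
  shows "finite {pmf (g s) a * pmf (delta s a b) t | s a b t. 0 < pmf (g s) a * pmf (delta s a b) t}"
proof (rule finite_subset)
  show "{pmf (g s) a * pmf (delta s a b) t | s a b t. 0 < pmf (g s) a * pmf (delta s a b) t}
     \<subseteq> (\<lambda>(s, a, b, t). pmf (g s) a * pmf (delta s a b) t) ` UNIV"
    by (auto simp: image_iff) force
qed simp

lemma min_step_prob_pos: "0 < min_step_prob delta g"
  unfolding min_step_prob_def using finite_step_probs[of g delta] by (subst Min_gr_iff) auto

lemma min_step_prob_le_1: "min_step_prob delta g \<le> 1"
  unfolding min_step_prob_def using finite_step_probs[of g delta] by (intro Min_le) auto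

lemma min_step_prob_le:
  assumes "a \<in> set_pmf (g s)" and "t \<in> set_pmf (delta s a b)"
  shows "min_step_prob delta g \<le> pmf (g s) a * pmf (delta s a b) t"
proof -
  have "0 < pmf (g s) a * pmf (delta s a b) t"
    using assms by (simp add: set_pmf_eq')
  then show ?thesis
    unfolding min_step_prob_def using finite_step_probs[of g delta] by (intro Min_le) blast+
qed

lemma attractor_reach_n_lower_bound:
  assumes st: "strategy Mv2 \<pi>2"
  shows "h \<noteq> [] \<Longrightarrow> last h \<in> attractor delta Mv2 g X k \<Longrightarrow>
     min_step_prob delta g ^ k \<le> reach_n delta X (memoryless g) \<pi>2 k h"
proof (induction k arbitrary: h)
  case 0
  then show ?case by (simp add: reach_n_last_in)
next
  case (Suc k)
  let ?p = "min_step_prob delta g"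
  let ?s = "last h"
  have p: "0 \<le> ?p" "?p \<le> 1" using min_step_prob_pos[of delta g] min_step_prob_le_1[of delta g] by auto
  show ?case
  proof (cases "?s \<in> attractor delta Mv2 g X k")
    case True
    have "?p ^ Suc k \<le> ?p ^ k" using p by (intro power_decreasing) auto
    also have "\<dots> \<le> reach_n delta X (memoryless g) \<pi>2 k h" using Suc.IH[OF Suc.prems(1) True] .
    also have "\<dots> \<le> reach_n delta X (memoryless g) \<pi>2 (Suc k) h" by (rule reach_n_le_Suc)
    finally show ?thesis .
  next
    case False
    have "?s \<notin> X" using False attractor_mono[of 0 k delta Mv2 g X] by auto
    have "?p ^ Suc k \<le> step_exp (g ?s) (\<pi>2 h) (delta ?s) (\<lambda>t. reach_n delta X (memoryless g) \<pi>2 k (h @ [t]))"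
    proof (rule step_exp_lower_bound[OF reach_n_nonneg])
      fix b assume "b \<in> set_pmf (\<pi>2 h)"
      then have "b \<in> Mv2 ?s" using st Suc.prems(1) by (auto simp: strategy_def)
      then obtain a t where a: "a \<in> set_pmf (g ?s)" and t: "t \<in> set_pmf (delta ?s a b)"
        and tk: "t \<in> attractor delta Mv2 g X k"
        using False Suc.prems(2) by fastforce
      have "?p * ?p ^ k \<le> (pmf (g ?s) a * pmf (delta ?s a b) t) * reach_n delta X (memoryless g) \<pi>2 k (h @ [t])"
        using a t tk p by (intro mult_mono min_step_prob_le Suc.IH) auto
      then show "\<exists>a\<in>set_pmf (g ?s). \<exists>t\<in>set_pmf (delta ?s a b).
          ?p ^ Suc k \<le> pmf (g ?s) a * pmf (delta ?s a b) t * reach_n delta X (memoryless g) \<pi>2 k (h @ [t])"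
        using a t by auto
    qed
    then show ?thesis using \<open>?s \<notin> X\<close> by (simp add: reach_n_Suc memoryless_def)
  qed
qed

lemma prob_reach_neq_1_obtains_trap:
  fixes delta :: "'s::finite \<Rightarrow> 'm::finite \<Rightarrow> 'm \<Rightarrow> 's pmf"
  assumes st: "strategy Mv2 \<pi>2" and miss: "prob_reach delta X (memoryless g) \<pi>2 s0 \<noteq> 1"
  obtains Z \<beta> where "Z \<noteq> {}" and "Z \<inter> X = {}" and "\<forall>s\<in>Z. \<beta> s \<in> Mv2 s"
    and "closed_under delta g \<beta> Z"
proof -
  obtain N where stable: "attractor delta Mv2 g X (Suc N) = attractor delta Mv2 g X N"
    using attractor_stabilizes by blast
  define Z where "Z = - attractor delta Mv2 g X N"
  have "Z \<noteq> {}"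
  proof
    assume "Z = {}"
    then have "last h \<in> attractor delta Mv2 g X N" for h :: "'s list"
      by (auto simp: Z_def)
    then have "prob_reach delta X (memoryless g) \<pi>2 s0 = 1"
      using attractor_reach_n_lower_bound[OF st] min_step_prob_pos[of delta g]
      by (intro prob_reach_eq_1_if_uniform_lower_bound[where q = "min_step_prob delta g ^ N" and N = N]) auto
    then show False using miss by simp
  qed
  moreover have "Z \<inter> X = {}"
    using attractor_mono[of 0 N delta Mv2 g X] by (auto simp: Z_def)
  moreover have "\<exists>b\<in>Mv2 s. \<forall>a\<in>set_pmf (g s). set_pmf (delta s a b) \<subseteq> Z" if "s \<in> Z" for s
  proof -
    have "s \<notin> attractor delta Mv2 g X (Suc N)" using that stable by (simp add: Z_def)
    then show ?thesis by (auto simp: Z_def)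
  qed
  then obtain \<beta> where "\<forall>s\<in>Z. \<beta> s \<in> Mv2 s \<and> (\<forall>a\<in>set_pmf (g s). set_pmf (delta s a (\<beta> s)) \<subseteq> Z)"
    by metis
  ultimately show ?thesis
    using that[of Z \<beta>] by (auto simp: closed_under_def)
qed

lemma val1_strat_le_prob_reach:
  "strategy Mv2 \<pi>2 \<Longrightarrow> val1_strat Mv2 delta T \<pi>1 s \<le> prob_reach delta T \<pi>1 \<pi>2 s"
  unfolding val1_strat_def
  by (rule cINF_lower) (auto intro!: bdd_belowI[where m = 0] prob_reach_nonneg)

lemma exists_strategy:
  assumes "\<forall>s. Mv2 s \<noteq> {}"
  shows "\<exists>\<pi>2. strategy Mv2 \<pi>2"
  using strategy_memoryless_return[of "\<lambda>s. SOME b. b \<in> Mv2 s" Mv2] assms by (auto simp: some_in_eq)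

lemma val1_strat_nonneg:
  "\<forall>s. Mv2 s \<noteq> {} \<Longrightarrow> 0 \<le> val1_strat Mv2 delta T \<pi>1 s"
  unfolding val1_strat_def using exists_strategy[of Mv2]
  by (intro cINF_greatest) (auto intro: prob_reach_nonneg)

lemma val1_strat_approx:
  assumes "\<forall>s. Mv2 s \<noteq> {}" and "0 < e"
  obtains \<pi>2 where "strategy Mv2 \<pi>2" and "prob_reach delta T \<pi>1 \<pi>2 s < val1_strat Mv2 delta T \<pi>1 s + e"
proof -
  have "(INF \<pi>2\<in>{\<pi>2. strategy Mv2 \<pi>2}. prob_reach delta T \<pi>1 \<pi>2 s) < val1_strat Mv2 delta T \<pi>1 s + e"
    using assms(2) by (simp add: val1_strat_def)
  then show ?thesis
    using that exists_strategy[OF assms(1)]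
    by (subst (asm) cINF_less_iff) (auto intro!: bdd_belowI[where m = 0] prob_reach_nonneg)
qed

lemma prob_reach_first_move:
  assumes ne: "\<forall>s. Mv2 s \<noteq> {}" and sT: "s \<notin> T" and b: "b \<in> Mv2 s"
    and P: "\<And>t. strategy Mv2 (P t)"
  obtains \<pi>2 where "strategy Mv2 \<pi>2"
    and "prob_reach delta T (memoryless g) \<pi>2 s
      \<le> step_exp (g s) (return_pmf b) (delta s) (\<lambda>t. prob_reach delta T (memoryless g) (P t) t)"
proof
  define first where "first x = (if x = s then b else SOME c. c \<in> Mv2 x)" for x
  \<comment> \<open>play \<open>b\<close> first, then from the successor \<open>t\<close> play \<open>P t\<close> as if the play had started in \<open>t\<close>\<close>
  define \<pi>2 where "\<pi>2 h = (case h of _ # t # rest \<Rightarrow> P t (t # rest) | _ \<Rightarrow> return_pmf (first (last h)))" for h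
  have first: "first x \<in> Mv2 x" for x
    using ne b by (auto simp: first_def some_in_eq)
  have "set_pmf (\<pi>2 h) \<subseteq> Mv2 (last h)" if "h \<noteq> []" for h
  proof -
    obtain x rest where h: "h = x # rest" using \<open>h \<noteq> []\<close> by (cases h) auto
    show ?thesis
    proof (cases rest)
      case Nil then show ?thesis using h first by (simp add: \<pi>2_def)
    next
      case (Cons t r)
      have "set_pmf (P t (t # r)) \<subseteq> Mv2 (last (t # r))"
        using P[of t] by (simp only: strategy_def) blast
      then show ?thesis using h Cons by (simp add: \<pi>2_def)
    qed
  qed
  then show "strategy Mv2 \<pi>2" by (simp add: strategy_def)
  let ?E = "step_exp (g s) (return_pmf b) (delta s)"
  have "reach_n delta T (memoryless g) \<pi>2 n [s]
      \<le> ?E (\<lambda>t. prob_reach delta T (memoryless g) (P t) t)" for n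
  proof (cases n)
    case 0
    then show ?thesis using sT by (simp add: step_exp_nonneg prob_reach_nonneg)
  next
    case (Suc m)
    have shift: "reach_n delta T (memoryless g) \<pi>2 m [s, t] = reach_n delta T (memoryless g) (P t) m [t]" for t
    proof -
      have "reach_n delta T (memoryless g) \<pi>2 m (s # [t]) =
          reach_n delta T (\<lambda>h. memoryless g (s # h)) (\<lambda>h. \<pi>2 (s # h)) m [t]"
        by (rule reach_n_Cons) simp
      also have "\<dots> = reach_n delta T (memoryless g) (P t) m [t]"
        by (rule reach_n_cong) (auto simp: memoryless_def \<pi>2_def)
      finally show ?thesis by simp
    qed
    have "reach_n delta T (memoryless g) \<pi>2 n [s] = ?E (\<lambda>t. reach_n delta T (memoryless g) (P t) m [t])"
      using sT Suc by (simp add: reach_n_Suc memoryless_def \<pi>2_def first_def shift[unfolded memoryless_def])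
    also have "\<dots> \<le> ?E (\<lambda>t. prob_reach delta T (memoryless g) (P t) t)"
      by (intro step_exp_mono reach_n_le_prob_reach)
    finally show ?thesis .
  qed
  then show "prob_reach delta T (memoryless g) \<pi>2 s \<le> ?E (\<lambda>t. prob_reach delta T (memoryless g) (P t) t)"
    unfolding prob_reach_def by (intro cSUP_least) auto
qed

lemma val1_strat_le_step_exp:
  assumes ne: "\<forall>s. Mv2 s \<noteq> {}" and sT: "s \<notin> T" and b: "b \<in> Mv2 s"
  shows "val1_strat Mv2 delta T (memoryless g) s \<le>
    step_exp (g s) (return_pmf b) (delta s) (val1_strat Mv2 delta T (memoryless g))"
proof (rule field_le_epsilon)
  fix e :: real assume e: "0 < e"
  let ?v = "val1_strat Mv2 delta T (memoryless g)"
  let ?E = "step_exp (g s) (return_pmf b) (delta s)"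
  have "\<forall>t. \<exists>\<pi>2. strategy Mv2 \<pi>2 \<and> prob_reach delta T (memoryless g) \<pi>2 t < ?v t + e"
    using val1_strat_approx[OF ne e] by metis
  then obtain P where P: "\<And>t. strategy Mv2 (P t)"
    and close: "\<And>t. prob_reach delta T (memoryless g) (P t) t < ?v t + e"
    by metis
  obtain \<pi>2 where "strategy Mv2 \<pi>2"
    and first: "prob_reach delta T (memoryless g) \<pi>2 s \<le> ?E (\<lambda>t. prob_reach delta T (memoryless g) (P t) t)"
    using prob_reach_first_move[OF ne sT b P] .
  then have "?v s \<le> ?E (\<lambda>t. prob_reach delta T (memoryless g) (P t) t)"
    using val1_strat_le_prob_reach order_trans by blast
  also have "\<dots> \<le> ?E (\<lambda>t. ?v t + e)"
    using close by (intro step_exp_mono less_imp_le)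
  finally show "?v s \<le> ?E ?v + e" by (simp add: step_exp_add_const)
qed

lemma Pre1_sel_le_step_exp:
  assumes ne: "\<forall>s. Mv2 s \<noteq> {}" and b: "b \<in> Mv2 s" and v: "\<And>t. 0 \<le> v t"
  shows "Pre1_sel Mv2 delta v xi s \<le> step_exp (xi s) (return_pmf b) (delta s) v"
proof -
  define xi2 where "xi2 x = return_pmf (if x = s then b else SOME c. c \<in> Mv2 x)" for x
  have "selector Mv2 xi2" using ne b by (auto simp: selector_def xi2_def some_in_eq)
  then have "Pre1_sel Mv2 delta v xi s \<le> Pre_pair delta v xi xi2 s"
    unfolding Pre1_sel_def
    by (intro cINF_lower) (auto intro!: bdd_belowI[where m = 0] sum_nonneg mult_nonneg_nonneg v simp: Pre_pair_def)
  also have "\<dots> = step_exp (xi s) (return_pmf b) (delta s) v"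
    unfolding Pre_pair_def step_exp_def xi2_def
    by (simp add: sum_distrib_left sum_distrib_right mult_ac)
  finally show ?thesis .
qed

lemma improve_step_max_value_trap:
  fixes delta :: "'s::finite \<Rightarrow> 'm::finite \<Rightarrow> 'm \<Rightarrow> 's pmf"
  assumes ne: "\<forall>s. Mv2 s \<noteq> {}" and step: "improve_step Mv1 Mv2 delta T g g'"
    and "Z \<noteq> {}" and disj: "Z \<inter> (T \<union> W2 Mv1 Mv2 delta T) = {}" and moves: "\<forall>s\<in>Z. \<beta> s \<in> Mv2 s"
    and closed: "closed_under delta g' \<beta> Z"
  obtains Z' where "Z' \<subseteq> Z" and "Z' \<noteq> {}" and "closed_under delta g \<beta> Z'"
proof -
  define v where "v = val1_strat Mv2 delta T (memoryless g)"
  define I where "I = {s. s \<notin> T \<union> W2 Mv1 Mv2 delta T \<and> Pre1 Mv1 Mv2 delta v s > v s}"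
  obtain xi1 where xi1: "\<forall>s\<in>I. Pre1_sel Mv2 delta v xi1 s = Pre1 Mv1 Mv2 delta v s"
    and g': "g' = (\<lambda>s. if s \<in> I then xi1 s else g s)"
    using step unfolding improve_step_def Let_def v_def[symmetric] I_def[symmetric] by blast
  define M where "M = Max (v ` Z)"
  define Z' where "Z' = {s\<in>Z. v s = M}"
  have le_M: "t \<in> Z \<Longrightarrow> v t \<le> M" for t
    unfolding M_def by (intro Max_ge) auto
  have "M \<in> v ` Z" unfolding M_def using \<open>Z \<noteq> {}\<close> by (intro Max_in) auto
  then have "Z' \<noteq> {}" by (auto simp: Z'_def)
  have succ_Z: "t \<in> Z" if "s \<in> Z" "a \<in> set_pmf (g' s)" "t \<in> set_pmf (delta s a (\<beta> s))" for s a t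
    using closed that by (auto simp: closed_under_def)
  have unchanged: "g' s = g s" if s: "s \<in> Z'" for s
  proof -
    have "s \<notin> I"
    proof
      assume "s \<in> I"
      then have "v s < Pre1_sel Mv2 delta v xi1 s" using xi1 by (simp add: I_def)
      also have "\<dots> \<le> step_exp (g' s) (return_pmf (\<beta> s)) (delta s) v"
        using Pre1_sel_le_step_exp[OF ne, of "\<beta> s" s v delta xi1] moves s \<open>s \<in> I\<close>
          val1_strat_nonneg[OF ne] by (simp add: Z'_def g' v_def)
      also have "\<dots> \<le> step_exp (g' s) (return_pmf (\<beta> s)) (delta s) (\<lambda>_. M)"
        using s succ_Z le_M by (intro step_exp_mono_support) (auto simp: Z'_def)
      finally show False using s by (simp add: Z'_def)
    qed
    then show ?thesis by (simp add: g')
  qed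
  have "closed_under delta g \<beta> Z'"
    unfolding closed_under_def
  proof (intro ballI subsetI)
    fix s a t assume s: "s \<in> Z'" and a: "a \<in> set_pmf (g s)" and t: "t \<in> set_pmf (delta s a (\<beta> s))"
    have "s \<in> Z" "s \<notin> T" using s disj by (auto simp: Z'_def)
    have "M \<le> step_exp (g s) (return_pmf (\<beta> s)) (delta s) v"
      using val1_strat_le_step_exp[OF ne \<open>s \<notin> T\<close>, of "\<beta> s" delta g] moves \<open>s \<in> Z\<close> s
      by (simp add: Z'_def v_def)
    moreover have "v t' \<le> M" if "a' \<in> set_pmf (g s)" "t' \<in> set_pmf (delta s a' b')" "b' \<in> set_pmf (return_pmf (\<beta> s))"
      for a' b' t'
      using that succ_Z[OF \<open>s \<in> Z\<close>] unchanged[OF s] le_M by auto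
    ultimately have "v t = M"
      using a t by (intro step_exp_ge_max_imp_eq[where q = "return_pmf (\<beta> s)" and b = "\<beta> s"]) auto
    then show "t \<in> Z'"
      using succ_Z[OF \<open>s \<in> Z\<close>] unchanged[OF s] a t by (simp add: Z'_def)
  qed
  moreover have "Z' \<subseteq> Z" by (auto simp: Z'_def)
  ultimately show ?thesis using that \<open>Z' \<noteq> {}\<close> by blast
qed

theorem lemma6:
  fixes Mv1 Mv2 :: "'s::finite \<Rightarrow> 'm::finite set"
    and delta :: "'s \<Rightarrow> 'm \<Rightarrow> 'm \<Rightarrow> 's pmf"
    and T :: "'s set"
    and gamma :: "nat \<Rightarrow> 's \<Rightarrow> 'm pmf"
    and i :: nat
  assumes "cgs Mv1 Mv2"
    and "absorbing Mv1 Mv2 delta (T \<union> W2 Mv1 Mv2 delta T)"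
    and "gamma 0 = uniform_selector Mv1"
    and "\<forall>j\<le>i. improve_step Mv1 Mv2 delta T (gamma j) (gamma (Suc j))"
    and "proper_selector Mv1 Mv2 delta T (gamma i)"
  shows "proper_selector Mv1 Mv2 delta T (gamma (Suc i))"
  \<comment> \<open>only the last improvement step is used\<close>
  unfolding proper_selector_def proper_strategy_def
proof (intro allI impI)
  let ?X = "T \<union> W2 Mv1 Mv2 delta T"
  have ne: "\<forall>s. Mv2 s \<noteq> {}" using assms(1) by (simp add: cgs_def)
  have step: "improve_step Mv1 Mv2 delta T (gamma i) (gamma (Suc i))" using assms(4) by simp
  fix \<pi>2 s0 assume st: "strategy Mv2 \<pi>2" and "s0 \<notin> ?X"
  show "prob_reach delta ?X (memoryless (gamma (Suc i))) \<pi>2 s0 = 1"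
  proof (rule ccontr)
    assume "prob_reach delta ?X (memoryless (gamma (Suc i))) \<pi>2 s0 \<noteq> 1"
    then obtain Z \<beta> where "Z \<noteq> {}" "Z \<inter> ?X = {}" "\<forall>s\<in>Z. \<beta> s \<in> Mv2 s"
      and "closed_under delta (gamma (Suc i)) \<beta> Z"
      using prob_reach_neq_1_obtains_trap[OF st] by metis
    then obtain Z' where "Z' \<subseteq> Z" "Z' \<noteq> {}" and closed: "closed_under delta (gamma i) \<beta> Z'"
      using improve_step_max_value_trap[OF ne step] by metis
    then obtain s where s: "s \<in> Z'" and "s \<notin> ?X" and moves: "\<forall>s\<in>Z'. \<beta> s \<in> Mv2 s" and "Z' \<inter> ?X = {}"
      using \<open>Z \<inter> ?X = {}\<close> \<open>\<forall>s\<in>Z. \<beta> s \<in> Mv2 s\<close> by blast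
    obtain \<pi>2' where "strategy Mv2 \<pi>2'" and "prob_reach delta ?X (memoryless (gamma i)) \<pi>2' s = 0"
      using closed_under_prob_reach_eq_0[OF ne closed moves \<open>Z' \<inter> ?X = {}\<close> s] .
    then show False
      using assms(5) \<open>s \<notin> ?X\<close> by (simp add: proper_selector_def proper_strategy_def)
  qed
qed

end
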